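(* Let $n\ge 2$, let $\Delta=\{1,2,\dots,n+1\}$ and let $P$ be a partition of $\{1,\dots,n+1\}$. Then there exists a strongly connected closed simplicial complex of type $\{3,4\}$ containing $\Delta$ as an $n$-face whose characteristic partition at $\Delta$ equals $P$, and any two such complexes are isomorphic by an isomorphism fixing each of $1,\dots,n+1$. Moreover, in any strongly connected closed simplicial complex of type $\{3,4\}$, the characteristic partitions at any two $n$-faces have the same multiset of part sizes.
   Context: An (abstract) simplicial complex of dimension $n$ is a family of finite nonempty sets closed under taking nonempty subsets and under nonempty intersections, whose maximal members (the $n$-faces or facets) all have cardinality $n+1$; a $k$-face is a member of cardinality $k+1$. It is closed if every $(n-1)$-face lies in exactly two $n$-faces. It is strongly connected if any two $n$-faces can be joined by a sequence of $n$-faces in which consecutive ones share an $(n-1)$-face. For an $(n-2)$-face $F$, every $n$-face $F'\supseteq F$ is $F\cup e$ for a unique $2$-set $e$; the link of $F$ is the graph formed by these edges $e$. A closed simplicial complex is of type $\{3,4\}$ if every $(n-2)$-face lies in exactly $3$ or $4$ $n$-faces (then its link is a single cycle of length $l(F)\in\{3,4\}$). Characteristic partition: in a closed complex of type $\{3,4\}$, let $\Delta=\{v_1,\dots,v_{n+1}\}$ be an $n$-face; for each $i$ let $\Delta_i$ be the unique $n$-face other than $\Delta$ containing $\Delta\setminus\{v_i\}$ and let $v_i'$ be the vertex of $\Delta_i$ not in $\Delta$. Declare $i\sim j$ iff $i=j$ or $v_i'=v_j'$ (equivalently $l(\Delta\setminus\{v_i,v_j\})=3$); this is an equivalence relation on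 $\{1,\dots,n+1\}$ and its classes form the characteristic partition at $\Delta$. Two complexes are isomorphic if there is a bijection between their vertex sets mapping faces exactly onto faces. *)

theory Defs
  imports Main "HOL-Library.Disjoint_Sets" "HOL-Library.Multiset"
begin

definition simplicial_complex :: "'a set set \<Rightarrow> nat \<Rightarrow> bool" where
  "simplicial_complex K n \<longleftrightarrow>
     (\<forall>F\<in>K. finite F \<and> F \<noteq> {}) \<and>
     (\<forall>F\<in>K. \<forall>G. G \<subseteq> F \<and> G \<noteq> {} \<longrightarrow> G \<in> K) \<and>
     (\<forall>F\<in>K. \<forall>G\<in>K. F \<inter> G \<noteq> {} \<longrightarrow> F \<inter> G \<in> K) \<and>
     (\<forall>F\<in>K. (\<not> (\<exists>G\<in>K. F \<subset> G)) \<longrightarrow> card F = n + 1)"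

definition facets_containing :: "'a set set \<Rightarrow> nat \<Rightarrow> 'a set \<Rightarrow> 'a set set" where
  "facets_containing K n F = {G \<in> K. card G = n + 1 \<and> F \<subseteq> G}"

definition closed_complex :: "'a set set \<Rightarrow> nat \<Rightarrow> bool" where
  "closed_complex K n \<longleftrightarrow> simplicial_complex K n \<and>
     (\<forall>F\<in>K. card F = n \<longrightarrow> card (facets_containing K n F) = 2)"

definition facet_adj :: "'a set set \<Rightarrow> nat \<Rightarrow> 'a set \<Rightarrow> 'a set \<Rightarrow> bool" where
  "facet_adj K n F G \<longleftrightarrow> F \<in> K \<and> G \<in> K \<and> card F = n + 1 \<and> card G = n + 1 \<and>
     card (F \<inter> G) = n"

definition strongly_connected :: "'a set set \<Rightarrow> nat \<Rightarrow> bool" where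
  "strongly_connected K n \<longleftrightarrow>
     (\<forall>F\<in>K. \<forall>G\<in>K. card F = n + 1 \<and> card G = n + 1 \<longrightarrow> (facet_adj K n)\<^sup>*\<^sup>* F G)"

definition type34 :: "'a set set \<Rightarrow> nat \<Rightarrow> bool" where
  "type34 K n \<longleftrightarrow> closed_complex K n \<and>
     (\<forall>F\<in>K. card F = n - 1 \<longrightarrow> card (facets_containing K n F) \<in> {3, 4})"

definition opp_vertex :: "'a set set \<Rightarrow> 'a set \<Rightarrow> 'a \<Rightarrow> 'a" where
  "opp_vertex K D v = (THE w. w \<notin> D \<and> insert w (D - {v}) \<in> K)"

definition char_rel :: "'a set set \<Rightarrow> 'a set \<Rightarrow> ('a \<times> 'a) set" where
  "char_rel K D = {(v, w). v \<in> D \<and> w \<in> D \<and> (v = w \<or> opp_vertex K D v = opp_vertex K D w)}"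

definition char_partition :: "'a set set \<Rightarrow> 'a set \<Rightarrow> 'a set set" where
  "char_partition K D = D // char_rel K D"

definition complex_iso :: "('a \<Rightarrow> 'b) \<Rightarrow> 'a set set \<Rightarrow> 'b set set \<Rightarrow> bool" where
  "complex_iso f K1 K2 \<longleftrightarrow> bij_betw f (\<Union>K1) (\<Union>K2) \<and>
     (\<forall>F. F \<subseteq> \<Union>K1 \<longrightarrow> (F \<in> K1 \<longleftrightarrow> f ` F \<in> K2))"

end

theory Submission
  imports Defs "HOL-Library.FuncSet"
begin

text \<open>Let \<open>B\<close> run through the classes of the characteristic partition at a facet \<open>D\<close>; all
  vertices of \<open>B\<close> have the same opposite vertex \<open>W B\<close>. The complex is then the join of the
  boundaries of the simplices \<open>B \<union> {W B}\<close>, whose facets omit exactly one vertex of every block.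
  In such a join the facets through a face \<open>F\<close> correspond to choices of one vertex from each
  \<open>C - F\<close>; for \<open>card F = n\<close> and \<open>card F = n - 1\<close> these numbers multiply to \<open>2\<close> and to \<open>3\<close> or
  \<open>4\<close>, so the join is closed of type \<open>{3,4}\<close>, and it is strongly connected by single vertex
  exchanges. Conversely, in a complex \<open>K\<close> of type \<open>{3,4}\<close> the link of an \<open>(n-2)\<close>-face is a
  cycle of length at most four, so every square of facets closes up; by induction on the
  distance from \<open>D\<close> all facets of the join lie in \<open>K\<close>, and strong connectivity of \<open>K\<close> leaves
  no room for others. This gives existence and uniqueness; and since the characteristic
  partition of the join at any facet \<open>S\<close> consists of the sets \<open>C \<inter> S\<close> of size \<open>card C - 1\<close>,
  its multiset of part sizes does not depend on \<open>S\<close>.\<close>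

lemma prod_eq_1_if_sum_eq_card:
  fixes g :: "'b \<Rightarrow> nat"
  assumes "finite A" "\<forall>x\<in>A. 1 \<le> g x" "sum g A = card A"
  shows "prod g A = 1"
  using assms
proof (induction A rule: finite_induct)
  case (insert a A)
  have "card A \<le> sum g A"
    using sum_bounded_below[of A 1 g] insert.prems(1) by simp
  moreover have "1 \<le> g a" using insert.prems(1) by simp
  moreover have "g a + sum g A = Suc (card A)" using insert.prems(2) insert.hyps by simp
  ultimately have "g a = 1" "sum g A = card A" by linarith+
  then show ?case using insert by simp
qed simp

lemma prod_eq_2_if_sum_eq_Suc_card:
  fixes g :: "'b \<Rightarrow> nat"
  assumes "finite A" "\<forall>x\<in>A. 1 \<le> g x" "sum g A = Suc (card A)"
  shows "prod g A = 2"
  using assms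
proof (induction A rule: finite_induct)
  case (insert a A)
  have "card A \<le> sum g A"
    using sum_bounded_below[of A 1 g] insert.prems(1) by simp
  moreover have "1 \<le> g a" using insert.prems(1) by simp
  moreover have "g a + sum g A = Suc (Suc (card A))" using insert.prems(2) insert.hyps by simp
  ultimately consider "g a = 1" "sum g A = Suc (card A)" | "g a = 2" "sum g A = card A"
    by linarith
  then show ?case
    using insert prod_eq_1_if_sum_eq_card[of A g] by cases simp_all
qed simp

lemma prod_in_3_4_if_sum_eq_card_plus_2:
  fixes g :: "'b \<Rightarrow> nat"
  assumes "finite A" "\<forall>x\<in>A. 1 \<le> g x" "sum g A = card A + 2"
  shows "prod g A \<in> {3, 4}"
  using assms
proof (induction A rule: finite_induct)
  case (insert a A)
  have "card A \<le> sum g A"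
    using sum_bounded_below[of A 1 g] insert.prems(1) by simp
  moreover have "1 \<le> g a" using insert.prems(1) by simp
  moreover have "g a + sum g A = card A + 3" using insert.prems(2) insert.hyps by simp
  ultimately consider "g a = 1" "sum g A = card A + 2" | "g a = 2" "sum g A = Suc (card A)"
    | "g a = 3" "sum g A = card A"
    by linarith
  then show ?case
    using insert prod_eq_1_if_sum_eq_card[of A g] prod_eq_2_if_sum_eq_Suc_card[of A g]
    by cases simp_all
qed simp

lemma card_Suc_superset_obtains_insert:
  assumes "finite G" "A \<subseteq> G" "card G = Suc (card A)"
  obtains y where "y \<notin> A" "G = insert y A"
proof -
  have "card (G - A) = 1"
    using assms finite_subset[OF assms(2,1)] by (simp add: card_Diff_subset)
  then obtain y where "G - A = {y}" by (rule card_1_singletonE)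
  then show ?thesis using assms(2) that by blast
qed

lemma card_exchange_Diff_less:
  assumes "finite S" "w \<in> S" "w \<notin> D" "c \<in> D"
  shows "card (insert c (S - {w}) - D) < card (S - D)"
proof -
  have eq: "insert c (S - {w}) - D = (S - D) - {w}" using assms(4) by blast
  have "card ((S - D) - {w}) < card (S - D)" using assms(1-3) by (intro card_Diff1_less) auto
  then show ?thesis by (simp only: eq)
qed

lemma inj_on_insert_Compl: "inj_on (\<lambda>v. insert v R) (- R)"
  by (rule inj_onI) blast

lemma inj_on_Un_disjoint: "inj_on (\<lambda>e. e \<union> E) {e. e \<inter> E = {}}"
  by (rule inj_onI) blast

section \<open>Closed complexes of type \<open>{3,4}\<close>\<close>

lemma simplicial_complex_subset_face:
  assumes "simplicial_complex K n" "F \<in> K" "G \<subseteq> F" "G \<noteq> {}"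
  shows "G \<in> K"
proof -
  have "\<forall>F\<in>K. \<forall>G. G \<subseteq> F \<and> G \<noteq> {} \<longrightarrow> G \<in> K"
    using assms(1) unfolding simplicial_complex_def by (elim conjE)
  then show ?thesis using assms(2-4) by blast
qed

lemma simplicial_complex_finite_face:
  assumes "simplicial_complex K n" "F \<in> K"
  shows "finite F"
proof -
  have "\<forall>F\<in>K. finite F \<and> F \<noteq> {}"
    using assms(1) unfolding simplicial_complex_def by (elim conjE)
  then show ?thesis using assms(2) by blast
qed

lemma simplicial_complex_maximal_face:
  assumes "simplicial_complex K n" "F \<in> K" "\<not> (\<exists>G\<in>K. F \<subset> G)"
  shows "card F = Suc n"
proof -
  have "\<forall>F\<in>K. \<not> (\<exists>G\<in>K. F \<subset> G) \<longrightarrow> card F = n + 1"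
    using assms(1) unfolding simplicial_complex_def by (elim conjE)
  then show ?thesis using assms(2,3) by simp
qed

lemma closed_complex_simplicial: "closed_complex K n \<Longrightarrow> simplicial_complex K n"
  by (simp add: closed_complex_def)

lemma closed_complex_card_facets_containing:
  "closed_complex K n \<Longrightarrow> R \<in> K \<Longrightarrow> card R = n \<Longrightarrow> card (facets_containing K n R) = 2"
  by (simp add: closed_complex_def)

lemma type34_closed_complex: "type34 K n \<Longrightarrow> closed_complex K n"
  by (simp add: type34_def)

lemma type34_card_facets_containing:
  "type34 K n \<Longrightarrow> E \<in> K \<Longrightarrow> card E = n - 1 \<Longrightarrow> card (facets_containing K n E) \<in> {3, 4}"
  by (simp add: type34_def)

lemma facet_minus_vertex_mem:
  assumes "simplicial_complex K n" "1 \<le> n" "X \<in> K" "card X = Suc n" "x \<in> X"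
  shows "X - {x} \<in> K"
proof -
  have "finite X" using assms(4) by (intro card_ge_0_finite) simp
  then have "0 < card (X - {x})" using assms(2,4,5) by simp
  then have "X - {x} \<noteq> {}" by (simp add: card_gt_0_iff)
  then show ?thesis by (rule simplicial_complex_subset_face[OF assms(1,3) Diff_subset])
qed

lemma facet_adj_exchange:
  assumes "facet_adj K n X G"
  obtains x y where "x \<in> X" "y \<notin> X" "G = insert y (X - {x})"
proof -
  have X: "card X = Suc n" "finite X" and G: "card G = Suc n" "finite G"
    and XG: "card (X \<inter> G) = n"
    using assms by (auto simp: facet_adj_def intro: card_ge_0_finite)
  then have "card (X - G) = 1" by (simp add: card_Diff_subset_Int)
  then obtain x where x: "X - G = {x}" by (rule card_1_singletonE)
  then have x_mem: "x \<in> X" "x \<notin> G" and sub: "X - {x} \<subseteq> G" by auto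
  then have "card G = Suc (card (X - {x}))" using X G by simp
  then obtain y where "y \<notin> X - {x}" "G = insert y (X - {x})"
    by (rule card_Suc_superset_obtains_insert[OF G(2) sub])
  then show ?thesis using that[of x y] x_mem by blast
qed

lemma closed_complex_other_facet:
  assumes "closed_complex K n" "R \<in> K" "card R = n" "X \<in> facets_containing K n R"
  obtains G where "facets_containing K n R = {X, G}" "G \<noteq> X"
proof -
  obtain A B where AB: "facets_containing K n R = {A, B}" "A \<noteq> B"
    using closed_complex_card_facets_containing[OF assms(1-3)] by (meson card_2_iff)
  show ?thesis
  proof (cases "X = A")
    case True
    then show ?thesis using that[of B] AB by simp
  next
    case False
    then have "X = B" using assms(4) AB by simp
    then show ?thesis using that[of A] AB by (simp add: insert_commute)
  qed
qed

lemma
  assumes cl: "closed_complex K n" and n: "1 \<le> n"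
    and X: "X \<in> K" "card X = Suc n" and x: "x \<in> X"
  shows opp_vertex_notin: "opp_vertex K X x \<notin> X"
    and opp_vertex_exchange_mem: "insert (opp_vertex K X x) (X - {x}) \<in> K"
    and opp_vertex_eqI: "y \<notin> X \<Longrightarrow> insert y (X - {x}) \<in> K \<Longrightarrow> opp_vertex K X x = y"
proof -
  let ?R = "X - {x}"
  have finX: "finite X" using X(2) by (intro card_ge_0_finite) simp
  have R: "?R \<in> K" "card ?R = n"
    using facet_minus_vertex_mem[OF closed_complex_simplicial[OF cl] n X x] X(2) x by auto
  have X_mem: "X \<in> facets_containing K n ?R" using X by (auto simp: facets_containing_def)
  obtain G where G: "facets_containing K n ?R = {X, G}" "G \<noteq> X"
    by (rule closed_complex_other_facet[OF cl R X_mem])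
  have apex: "insert y ?R \<in> facets_containing K n ?R" if "y \<notin> X" "insert y ?R \<in> K" for y
    using that R finX by (auto simp: facets_containing_def)
  have "G \<in> K" "card G = Suc n" "?R \<subseteq> G"
    using G(1) by (auto simp: facets_containing_def)
  then obtain y0 where y0: "y0 \<notin> ?R" "G = insert y0 ?R"
    using card_Suc_superset_obtains_insert[of G ?R] R(2) card_ge_0_finite[of G] by auto
  then have y0X: "y0 \<notin> X" using G(2) x by blast
  have unique: "y = y0" if "y \<notin> X" "insert y ?R \<in> K" for y
  proof -
    have "insert y ?R \<noteq> X" using that(1) by blast
    then have "insert y ?R = G" using apex[OF that] G(1) by simp
    then have "y \<in> insert y0 ?R" using y0(2) insertI1[of y ?R] by simp
    then show ?thesis using that(1) by blast
  qed
  have opp: "opp_vertex K X x = y0"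
    unfolding opp_vertex_def using y0X y0(2) \<open>G \<in> K\<close> unique by (intro the_equality) blast+
  then show "opp_vertex K X x \<notin> X" "insert (opp_vertex K X x) ?R \<in> K"
    using y0X y0(2) \<open>G \<in> K\<close> by simp_all
  show "y \<notin> X \<Longrightarrow> insert y ?R \<in> K \<Longrightarrow> opp_vertex K X x = y"
    using opp unique[of y] by argo
qed

lemma closed_complex_card_face_le_Suc_Suc:
  assumes cl: "closed_complex K n" and n: "1 \<le> n" and H: "H \<in> K"
  shows "card H \<le> Suc (Suc n)"
proof (rule ccontr)
  assume "\<not> ?thesis"
  then have big: "3 + n \<le> card H" by simp
  have sc: "simplicial_complex K n" by (rule closed_complex_simplicial[OF cl])
  have finH: "finite H" by (rule simplicial_complex_finite_face[OF sc H])
  obtain T where T: "T \<subseteq> H" "card T = 3" "finite T"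
    using big by (metis obtain_subset_with_card_n le_add1 order_trans)
  have "n \<le> card (H - T)" using big T finH by (simp add: card_Diff_subset)
  then obtain R where R: "R \<subseteq> H - T" "card R = n" "finite R" by (rule obtain_subset_with_card_n)
  have "R \<noteq> {}" using R(2) n by auto
  then have RK: "R \<in> K" using R(1) by (intro simplicial_complex_subset_face[OF sc H]) auto
  have "(\<lambda>v. insert v R) ` T \<subseteq> facets_containing K n R"
  proof
    fix G assume "G \<in> (\<lambda>v. insert v R) ` T"
    then obtain v where v: "v \<in> T" "G = insert v R" by blast
    then have "G \<subseteq> H" "v \<notin> R" using R(1) T(1) by auto
    then show "G \<in> facets_containing K n R"
      using v simplicial_complex_subset_face[OF sc H] R(2,3) by (auto simp: facets_containing_def)
  qed
  moreover have "card ((\<lambda>v. insert v R) ` T) = 3"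
    using card_image[OF inj_on_subset[OF inj_on_insert_Compl, of T R]] R(1) T(2) by auto
  moreover have "finite (facets_containing K n R)"
    using closed_complex_card_facets_containing[OF cl RK R(2)] by (intro card_ge_0_finite) simp
  ultimately have "3 \<le> card (facets_containing K n R)" by (metis card_mono)
  then show False using closed_complex_card_facets_containing[OF cl RK R(2)] by simp
qed

lemma closed_complex_card_face_le:
  assumes cl: "closed_complex K n" and n: "1 \<le> n" and H: "H \<in> K"
  shows "card H \<le> Suc n"
proof (rule ccontr)
  assume "\<not> ?thesis"
  then obtain H' where H': "H' \<subseteq> H" "card H' = Suc (Suc n)" "finite H'"
    by (metis not_less_eq_eq obtain_subset_with_card_n)
  have sc: "simplicial_complex K n" by (rule closed_complex_simplicial[OF cl])
  have "H' \<noteq> {}" using H'(2) by auto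
  then have H'K: "H' \<in> K" by (rule simplicial_complex_subset_face[OF sc H H'(1)])
  have "\<exists>G\<in>K. H' \<subset> G"
    using simplicial_complex_maximal_face[OF sc H'K] H'(2) by auto
  then obtain G where G: "G \<in> K" "H' \<subset> G" by blast
  then have "card H' < card G"
    using simplicial_complex_finite_face[OF sc G(1)] by (simp add: psubset_card_mono)
  then show False
    using closed_complex_card_face_le_Suc_Suc[OF cl n G(1)] H'(2) by simp
qed

lemma closed_complex_face_subset_facet:
  assumes cl: "closed_complex K n" and n: "1 \<le> n" and F: "F \<in> K"
  obtains G where "G \<in> K" "card G = Suc n" "F \<subseteq> G"
proof -
  have sc: "simplicial_complex K n" by (rule closed_complex_simplicial[OF cl])
  have "\<exists>G. (G \<in> K \<and> F \<subseteq> G) \<and> (\<forall>G'. G' \<in> K \<and> F \<subseteq> G' \<longrightarrow> card G' \<le> card G)"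
    using F closed_complex_card_face_le[OF cl n] less_Suc_eq_le
    by (intro Lattices_Big.ex_has_greatest_nat[where b = "Suc (Suc n)"]) auto
  then obtain G where G: "G \<in> K" "F \<subseteq> G"
    and greatest: "\<And>G'. G' \<in> K \<Longrightarrow> F \<subseteq> G' \<Longrightarrow> card G' \<le> card G" by blast
  have "\<not> (\<exists>G'\<in>K. G \<subset> G')"
  proof
    assume "\<exists>G'\<in>K. G \<subset> G'"
    then obtain G' where G': "G' \<in> K" "G \<subset> G'" by blast
    then have "card G < card G'"
      using simplicial_complex_finite_face[OF sc G'(1)] by (simp add: psubset_card_mono)
    moreover have "card G' \<le> card G" using greatest G' G(2) by blast
    ultimately show False by simp
  qed
  then show ?thesis using that G simplicial_complex_maximal_face[OF sc G(1)] by blast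
qed

lemma closed_complex_link_neighbour:
  assumes cl: "closed_complex K n" and n: "1 \<le> n" and ab: "insert a (insert b E) \<in> K"
    and card: "card (insert a (insert b E)) = Suc n" and ab_notin: "a \<notin> E" "b \<notin> E" "a \<noteq> b"
  obtains y where "y \<notin> E" "y \<noteq> a" "y \<noteq> b" "insert y (insert a E) \<in> K"
proof -
  have b: "b \<in> insert a (insert b E)" by simp
  have "insert a (insert b E) - {b} = insert a E" using ab_notin by auto
  then show ?thesis
    using that opp_vertex_notin[OF cl n ab card b] opp_vertex_exchange_mem[OF cl n ab card b] by auto
qed

text \<open>The link of \<open>E\<close> is a cycle of length at most four; if the path \<open>a b c d\<close> in it
  did not close up, the second neighbours \<open>y\<close> of \<open>a\<close> and \<open>y'\<close> of \<open>d\<close> would give five facets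
  through \<open>E\<close>.\<close>

lemma type34_close_square:
  assumes t: "type34 K n" and n: "2 \<le> n" and E: "card E = n - 1"
    and notin: "a \<notin> E" "b \<notin> E" "c \<notin> E" "d \<notin> E" and dist: "distinct [a, b, c, d]"
    and ab: "insert a (insert b E) \<in> K" and bc: "insert b (insert c E) \<in> K"
    and cd: "insert c (insert d E) \<in> K"
  shows "insert d (insert a E) \<in> K"
proof (rule ccontr)
  assume da: "insert d (insert a E) \<notin> K"
  have cl: "closed_complex K n" by (rule type34_closed_complex[OF t])
  have finE: "finite E" using E n by (intro card_ge_0_finite) simp
  have card2: "card (insert p (insert q E)) = Suc n" if "p \<notin> E" "q \<notin> E" "p \<noteq> q" for p q
    using that finE E n by simp
  have n1: "1 \<le> n" using n by simp
  obtain y where y: "y \<notin> E" "y \<noteq> a" "y \<noteq> b" "insert y (insert a E) \<in> K"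
    using closed_complex_link_neighbour[OF cl n1 ab card2] notin dist by auto
  with da have "y \<noteq> d" by auto
  have dc: "insert d (insert c E) \<in> K" using cd by (simp add: insert_commute)
  obtain y' where y': "y' \<notin> E" "y' \<noteq> d" "y' \<noteq> c" "insert y' (insert d E) \<in> K"
    using closed_complex_link_neighbour[OF cl n1 dc card2] notin dist by auto
  with da have "y' \<noteq> a" by (auto simp: insert_commute)
  let ?edges = "{{a, b}, {b, c}, {c, d}, {a, y}, {d, y'}}"
  have "inj_on (\<lambda>e. e \<union> E) ?edges"
    using notin y(1) y'(1) by (intro inj_on_subset[OF inj_on_Un_disjoint]) auto
  moreover have "card ?edges = 5"
    using dist \<open>y \<noteq> d\<close> \<open>y' \<noteq> a\<close> y(2,3) y'(2,3) by (auto simp: doubleton_eq_iff card_insert_if)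
  ultimately have "card ((\<lambda>e. e \<union> E) ` ?edges) = 5" by (metis card_image)
  moreover have "(\<lambda>e. e \<union> E) ` ?edges \<subseteq> facets_containing K n E"
    using ab bc cd y y' notin dist \<open>y \<noteq> d\<close> \<open>y' \<noteq> a\<close> card2
    by (auto simp: facets_containing_def insert_commute)
  moreover have EK: "E \<in> K"
    using E n finE by (intro simplicial_complex_subset_face[OF closed_complex_simplicial[OF cl] ab]) auto
  then have "finite (facets_containing K n E)"
    using type34_card_facets_containing[OF t EK E] card_ge_0_finite by force
  ultimately have "5 \<le> card (facets_containing K n E)" by (metis card_mono)
  then show False using type34_card_facets_containing[OF t EK E] by auto
qed

lemma equiv_char_rel: "equiv D (char_rel K D)"
  by (auto simp: char_rel_def equiv_def refl_on_def sym_def trans_def)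

section \<open>Joins of boundaries of simplices\<close>

text \<open>The join of the boundaries of the simplices \<open>C \<in> Q\<close> (for pairwise disjoint blocks \<open>Q\<close>):
  a facet omits exactly one vertex of every block.\<close>

definition join_facets :: "'a set set \<Rightarrow> 'a set set" where
  "join_facets Q = {S. S \<subseteq> \<Union>Q \<and> (\<forall>C\<in>Q. card (C - S) = 1)}"

definition boundary_join :: "'a set set \<Rightarrow> 'a set set" where
  "boundary_join Q = {F. F \<noteq> {} \<and> (\<exists>S\<in>join_facets Q. F \<subseteq> S)}"

definition missing_vertex :: "'a set \<Rightarrow> 'a set \<Rightarrow> 'a" where
  "missing_vertex S C = the_elem (C - S)"

lemma join_facet_image:
  assumes f: "inj_on f (\<Union>Q)" and S: "S \<in> join_facets Q"
  shows "f ` S \<in> join_facets ((`) f ` Q)"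
proof -
  have SU: "S \<subseteq> \<Union>Q" using S by (simp add: join_facets_def)
  have "card (f ` C - f ` S) = 1" if C: "C \<in> Q" for C
  proof -
    have "f ` C - f ` S = f ` (C - S)"
      using C SU by (intro inj_on_image_set_diff[OF f, symmetric]) auto
    moreover have "inj_on f (C - S)" using C by (intro inj_on_subset[OF f]) auto
    ultimately show ?thesis using S C by (simp add: card_image join_facets_def)
  qed
  moreover have "f ` S \<subseteq> \<Union>((`) f ` Q)" using SU by blast
  ultimately show ?thesis unfolding join_facets_def by blast
qed

lemma boundary_join_image:
  assumes f: "inj_on f (\<Union>Q)"
  shows "boundary_join ((`) f ` Q) = (`) f ` boundary_join Q"
proof
  show "(`) f ` boundary_join Q \<subseteq> boundary_join ((`) f ` Q)"
    using join_facet_image[OF f] by (fastforce simp: boundary_join_def)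
  let ?g = "inv_into (\<Union>Q) f"
  have g: "inj_on ?g (\<Union>((`) f ` Q))"
    using inj_on_inv_into[of "\<Union>((`) f ` Q)" f "\<Union>Q"] by auto
  have gf: "(`) ?g ` (`) f ` Q = Q"
  proof -
    have "?g ` f ` C = C" if "C \<in> Q" for C
      using that by (intro inv_into_image_cancel[OF f]) auto
    then show ?thesis by (simp add: image_image)
  qed
  show "boundary_join ((`) f ` Q) \<subseteq> (`) f ` boundary_join Q"
  proof
    fix F assume F: "F \<in> boundary_join ((`) f ` Q)"
    then have "?g ` F \<in> boundary_join Q"
      using join_facet_image[OF g] gf by (fastforce simp: boundary_join_def)
    moreover have "F \<subseteq> f ` \<Union>Q"
      using F by (auto simp: boundary_join_def join_facets_def)
    then have "F = f ` ?g ` F" by (simp add: image_inv_into_cancel)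
    ultimately show "F \<in> (`) f ` boundary_join Q" by blast
  qed
qed

locale block_family =
  fixes Q :: "'a set set" and n :: nat
  assumes finite_Q: "finite Q"
    and finite_block: "C \<in> Q \<Longrightarrow> finite C"
    and two_le_card_block: "C \<in> Q \<Longrightarrow> 2 \<le> card C"
    and disjoint_Q: "disjoint Q"
    and card_Union_Q: "card (\<Union>Q) = card Q + Suc n"
begin

lemma finite_Union_Q: "finite (\<Union>Q)"
  using finite_Q finite_block by blast

lemma block_eqI: "C \<in> Q \<Longrightarrow> C' \<in> Q \<Longrightarrow> x \<in> C \<Longrightarrow> x \<in> C' \<Longrightarrow> C = C'"
  using disjointD[OF disjoint_Q] by blast

lemma join_facet_subset: "S \<in> join_facets Q \<Longrightarrow> S \<subseteq> \<Union>Q"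
  by (simp add: join_facets_def)

lemma finite_join_facet: "S \<in> join_facets Q \<Longrightarrow> finite S"
  using join_facet_subset finite_Union_Q finite_subset by blast

lemma block_diff_join_facet:
  assumes "S \<in> join_facets Q" "C \<in> Q"
  shows "C - S = {missing_vertex S C}"
proof -
  have "card (C - S) = 1" using assms by (simp add: join_facets_def)
  then obtain y where "C - S = {y}" by (rule card_1_singletonE)
  then show ?thesis by (simp add: missing_vertex_def)
qed

lemma missing_vertex_in_block: "S \<in> join_facets Q \<Longrightarrow> C \<in> Q \<Longrightarrow> missing_vertex S C \<in> C"
  and missing_vertex_notin: "S \<in> join_facets Q \<Longrightarrow> C \<in> Q \<Longrightarrow> missing_vertex S C \<notin> S"
  using block_diff_join_facet by blast+

lemma missing_vertex_eqI:
  assumes "S \<in> join_facets Q" "C \<in> Q" "y \<in> C" "y \<notin> S"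
  shows "missing_vertex S C = y"
  using block_diff_join_facet[OF assms(1,2)] assms(3,4) by (metis DiffI singletonD)

lemma join_facet_eq: "S \<in> join_facets Q \<Longrightarrow> S = \<Union>Q - missing_vertex S ` Q"
  using join_facet_subset missing_vertex_eqI missing_vertex_in_block missing_vertex_notin
  by fastforce

lemma card_join_facet:
  assumes S: "S \<in> join_facets Q"
  shows "card S = Suc n"
proof -
  have "inj_on (missing_vertex S) Q"
    using block_eqI missing_vertex_in_block[OF S] by (metis inj_onI)
  then have "card (missing_vertex S ` Q) = card Q" by (rule card_image)
  moreover have "card (\<Union>Q - missing_vertex S ` Q) = card (\<Union>Q) - card (missing_vertex S ` Q)"
    using missing_vertex_in_block[OF S] finite_Q by (intro card_Diff_subset) auto
  ultimately show ?thesis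
    using join_facet_eq[OF S] card_Union_Q by simp
qed

lemma join_facet_of_choice:
  assumes "\<And>C. C \<in> Q \<Longrightarrow> m C \<in> C"
  shows "\<Union>Q - m ` Q \<in> join_facets Q"
    and "C \<in> Q \<Longrightarrow> missing_vertex (\<Union>Q - m ` Q) C = m C"
proof -
  have diff: "C - (\<Union>Q - m ` Q) = {m C}" if "C \<in> Q" for C
    using assms block_eqI that by blast
  then show "\<Union>Q - m ` Q \<in> join_facets Q" by (simp add: join_facets_def)
  show "C \<in> Q \<Longrightarrow> missing_vertex (\<Union>Q - m ` Q) C = m C"
    using diff by (simp add: missing_vertex_def)
qed

lemma join_facet_exchange:
  assumes S: "S \<in> join_facets Q" and C: "C \<in> Q" and x: "x \<in> C" "x \<in> S"
  defines "T \<equiv> insert (missing_vertex S C) (S - {x})"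
  shows "T \<in> join_facets Q"
    and "C' \<in> Q \<Longrightarrow> C' \<noteq> C \<Longrightarrow> missing_vertex T C' = missing_vertex S C'"
proof -
  have C_diff: "C - T = {x}"
    using block_diff_join_facet[OF S C] x by (auto simp: T_def)
  have other_diff: "C' - T = C' - S" if "C' \<in> Q" "C' \<noteq> C" for C'
    using block_eqI[OF C that(1)] missing_vertex_in_block[OF S C] x that(2)
    by (auto simp: T_def)
  have "card (C' - T) = 1" if "C' \<in> Q" for C'
    using C_diff other_diff S that by (cases "C' = C") (auto simp: join_facets_def)
  moreover have "T \<subseteq> \<Union>Q"
    using join_facet_subset[OF S] missing_vertex_in_block[OF S C] C by (auto simp: T_def)
  ultimately show "T \<in> join_facets Q" by (simp add: join_facets_def)
  show "C' \<in> Q \<Longrightarrow> C' \<noteq> C \<Longrightarrow> missing_vertex T C' = missing_vertex S C'"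
    using other_diff by (simp add: missing_vertex_def)
qed

lemma join_facet_mem_boundary_join: "S \<in> join_facets Q \<Longrightarrow> S \<in> boundary_join Q"
  using card_join_facet[of S] by (auto simp: boundary_join_def)

lemma boundary_join_subset_Union: "F \<in> boundary_join Q \<Longrightarrow> F \<subseteq> \<Union>Q"
  using join_facet_subset by (auto simp: boundary_join_def)

lemma boundary_join_facet:
  assumes "G \<in> boundary_join Q" "card G = Suc n"
  shows "G \<in> join_facets Q"
proof -
  obtain S where S: "S \<in> join_facets Q" "G \<subseteq> S" using assms(1) by (auto simp: boundary_join_def)
  then have "G = S"
    using assms(2) card_join_facet[OF S(1)] finite_join_facet[OF S(1)] by (metis card_subset_eq)
  then show ?thesis using S(1) by simp
qed

lemma facets_containing_boundary_join:
  "facets_containing (boundary_join Q) n F = {S \<in> join_facets Q. F \<subseteq> S}"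
  using boundary_join_facet join_facet_mem_boundary_join card_join_facet
  by (auto simp: facets_containing_def)

lemma bij_betw_join_facets_containing:
  assumes F: "F \<subseteq> \<Union>Q"
  shows "bij_betw (\<lambda>S. restrict (missing_vertex S) Q) {S \<in> join_facets Q. F \<subseteq> S}
           (\<Pi>\<^sub>E C\<in>Q. C - F)"
proof (rule bij_betw_byWitness[where f' = "\<lambda>m. \<Union>Q - m ` Q"])
  show "\<forall>S\<in>{S \<in> join_facets Q. F \<subseteq> S}. \<Union>Q - restrict (missing_vertex S) Q ` Q = S"
    using join_facet_eq by auto
  show "\<forall>m\<in>\<Pi>\<^sub>E C\<in>Q. C - F. restrict (missing_vertex (\<Union>Q - m ` Q)) Q = m"
  proof
    fix m assume m: "m \<in> (\<Pi>\<^sub>E C\<in>Q. C - F)"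
    then have "\<And>C. C \<in> Q \<Longrightarrow> m C \<in> C" by auto
    then have "restrict (missing_vertex (\<Union>Q - m ` Q)) Q = restrict m Q"
      by (intro restrict_ext) (rule join_facet_of_choice(2))
    also have "\<dots> = m" using m by (simp add: PiE_iff extensional_restrict)
    finally show "restrict (missing_vertex (\<Union>Q - m ` Q)) Q = m" .
  qed
  show "(\<lambda>S. restrict (missing_vertex S) Q) ` {S \<in> join_facets Q. F \<subseteq> S} \<subseteq> (\<Pi>\<^sub>E C\<in>Q. C - F)"
    using missing_vertex_in_block missing_vertex_notin by (auto simp: restrict_PiE_iff)
  show "(\<lambda>m. \<Union>Q - m ` Q) ` (\<Pi>\<^sub>E C\<in>Q. C - F) \<subseteq> {S \<in> join_facets Q. F \<subseteq> S}"
  proof clarify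
    fix m assume m: "m \<in> (\<Pi>\<^sub>E C\<in>Q. C - F)"
    then have "\<And>C. C \<in> Q \<Longrightarrow> m C \<in> C" by auto
    then have "\<Union>Q - m ` Q \<in> join_facets Q" by (rule join_facet_of_choice(1))
    moreover have "F \<subseteq> \<Union>Q - m ` Q" using F m by auto
    ultimately show "\<Union>Q - m ` Q \<in> join_facets Q \<and> F \<subseteq> \<Union>Q - m ` Q" ..
  qed
qed

lemma card_facets_containing_boundary_join:
  assumes "F \<subseteq> \<Union>Q"
  shows "card (facets_containing (boundary_join Q) n F) = (\<Prod>C\<in>Q. card (C - F))"
  using bij_betw_same_card[OF bij_betw_join_facets_containing[OF assms]] finite_Q
  by (simp add: facets_containing_boundary_join card_PiE)

lemma sum_card_block_diff:
  assumes F: "F \<subseteq> \<Union>Q"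
  shows "(\<Sum>C\<in>Q. card (C - F)) = card Q + Suc n - card F"
proof -
  have "(\<Sum>C\<in>Q. card (C - F)) = card (\<Union>C\<in>Q. C - F)"
    using finite_Q finite_block disjointD[OF disjoint_Q]
    by (intro card_UN_disjoint[symmetric]) auto
  also have "(\<Union>C\<in>Q. C - F) = \<Union>Q - F" by blast
  also have "card (\<Union>Q - F) = card Q + Suc n - card F"
    using F finite_Union_Q card_Union_Q by (simp add: card_Diff_subset finite_subset)
  finally show ?thesis .
qed

lemma one_le_card_block_diff:
  assumes "F \<in> boundary_join Q" "C \<in> Q"
  shows "1 \<le> card (C - F)"
proof -
  obtain S where S: "S \<in> join_facets Q" "F \<subseteq> S" using assms(1) by (auto simp: boundary_join_def)
  then have "missing_vertex S C \<in> C - F"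
    using missing_vertex_in_block missing_vertex_notin assms(2) by blast
  then show ?thesis using finite_block[OF assms(2)] by (metis One_nat_def Suc_leI card_gt_0_iff empty_iff finite_Diff)
qed

lemma simplicial_complex_boundary_join: "simplicial_complex (boundary_join Q) n"
  unfolding simplicial_complex_def
proof (intro conjI ballI allI impI)
  fix F assume F: "F \<in> boundary_join Q"
  obtain S where S: "S \<in> join_facets Q" "F \<subseteq> S" using F by (auto simp: boundary_join_def)
  then show "finite F" using finite_subset finite_join_facet by metis
  show "F \<noteq> {}" using F by (simp add: boundary_join_def)
  show "G \<in> boundary_join Q" if "G \<subseteq> F \<and> G \<noteq> {}" for G
    using F that unfolding boundary_join_def by blast
  show "F \<inter> G \<in> boundary_join Q" if "G \<in> boundary_join Q" "F \<inter> G \<noteq> {}" for G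
    using F that unfolding boundary_join_def by blast
  assume max: "\<not> (\<exists>G\<in>boundary_join Q. F \<subset> G)"
  moreover have "S \<in> boundary_join Q" using S(1) by (rule join_facet_mem_boundary_join)
  ultimately have "F = S" using S(2) by blast
  then show "card F = n + 1" using card_join_facet S(1) by simp
qed

lemma closed_complex_boundary_join: "closed_complex (boundary_join Q) n"
  unfolding closed_complex_def
proof (intro conjI ballI impI simplicial_complex_boundary_join)
  fix F assume F: "F \<in> boundary_join Q" "card F = n"
  have "(\<Sum>C\<in>Q. card (C - F)) = Suc (card Q)"
    using sum_card_block_diff[OF boundary_join_subset_Union[OF F(1)]] F(2) by simp
  then show "card (facets_containing (boundary_join Q) n F) = 2"
    using card_facets_containing_boundary_join[OF boundary_join_subset_Union[OF F(1)]]
      prod_eq_2_if_sum_eq_Suc_card[OF finite_Q] one_le_card_block_diff[OF F(1)] by simp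
qed

lemma type34_boundary_join:
  assumes "2 \<le> n"
  shows "type34 (boundary_join Q) n"
  unfolding type34_def
proof (intro conjI ballI impI closed_complex_boundary_join)
  fix F assume F: "F \<in> boundary_join Q" "card F = n - 1"
  have "(\<Sum>C\<in>Q. card (C - F)) = card Q + 2"
    using sum_card_block_diff[OF boundary_join_subset_Union[OF F(1)]] F(2) assms by simp
  then show "card (facets_containing (boundary_join Q) n F) \<in> {3, 4}"
    using card_facets_containing_boundary_join[OF boundary_join_subset_Union[OF F(1)]]
      prod_in_3_4_if_sum_eq_card_plus_2[OF finite_Q] one_le_card_block_diff[OF F(1)] by simp
qed

lemma facet_adj_join_facet_exchange:
  assumes S: "S \<in> join_facets Q" and C: "C \<in> Q" and x: "x \<in> C" "x \<in> S"
  shows "facet_adj (boundary_join Q) n S (insert (missing_vertex S C) (S - {x}))"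
proof -
  let ?T = "insert (missing_vertex S C) (S - {x})"
  have T: "?T \<in> join_facets Q" by (rule join_facet_exchange(1)[OF assms])
  have "S \<inter> ?T = S - {x}" using missing_vertex_notin[OF S C] by auto
  then have "card (S \<inter> ?T) = n" using card_join_facet[OF S] finite_join_facet[OF S] x by simp
  then show ?thesis
    using S T join_facet_mem_boundary_join card_join_facet by (simp add: facet_adj_def)
qed

lemma join_facets_connected:
  assumes T: "T \<in> join_facets Q"
  shows "S \<in> join_facets Q \<Longrightarrow> (facet_adj (boundary_join Q) n)\<^sup>*\<^sup>* S T"
proof (induction "card (S - T)" arbitrary: S)
  case 0
  then have "S \<subseteq> T" using finite_join_facet by auto
  then have "S = T"
    using card_join_facet[OF T] card_join_facet[OF "0.prems"] finite_join_facet[OF T]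
    by (metis card_subset_eq)
  then show ?case by simp
next
  case (Suc d)
  then obtain x where x: "x \<in> S" "x \<notin> T" by (metis Diff_iff card.empty all_not_in_conv nat.distinct(1))
  then obtain C where C: "C \<in> Q" "x \<in> C" using join_facet_subset[OF Suc.prems] by blast
  let ?S' = "insert (missing_vertex S C) (S - {x})"
  have "C - T = {x}"
    using block_diff_join_facet[OF T C(1)] missing_vertex_eqI[OF T C x(2)] by simp
  moreover have "missing_vertex S C \<in> C" "missing_vertex S C \<noteq> x"
    using missing_vertex_in_block[OF Suc.prems C(1)] missing_vertex_notin[OF Suc.prems C(1)] x(1)
    by auto
  ultimately have "missing_vertex S C \<in> T" by blast
  then have "?S' - T = (S - T) - {x}" by auto
  then have "card (?S' - T) = d" using Suc.hyps(2) x finite_join_facet[OF Suc.prems] by simp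
  then have "(facet_adj (boundary_join Q) n)\<^sup>*\<^sup>* ?S' T"
    using Suc.hyps(1) join_facet_exchange(1)[OF Suc.prems C x(1)] by simp
  moreover have "facet_adj (boundary_join Q) n S ?S'"
    by (rule facet_adj_join_facet_exchange[OF Suc.prems C x(1)])
  ultimately show ?case by (rule converse_rtranclp_into_rtranclp[rotated])
qed

lemma strongly_connected_boundary_join: "strongly_connected (boundary_join Q) n"
  unfolding strongly_connected_def using join_facets_connected boundary_join_facet by simp

lemma Union_boundary_join: "\<Union>(boundary_join Q) = \<Union>Q"
proof
  show "\<Union>(boundary_join Q) \<subseteq> \<Union>Q" using boundary_join_subset_Union by blast
  show "\<Union>Q \<subseteq> \<Union>(boundary_join Q)"
  proof
    fix v assume v: "v \<in> \<Union>Q"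
    have "\<not> C \<subseteq> {v}" if "C \<in> Q" for C
    proof
      assume "C \<subseteq> {v}"
      then have "card C \<le> 1" using card_mono[of "{v}" C] by simp
      then show False using two_le_card_block[OF that] by simp
    qed
    then have "\<forall>C\<in>Q. \<exists>y. y \<in> C - {v}" by blast
    then obtain m where m: "\<And>C. C \<in> Q \<Longrightarrow> m C \<in> C - {v}" by metis
    then have "\<Union>Q - m ` Q \<in> join_facets Q" by (intro join_facet_of_choice(1)) blast
    moreover have "v \<in> \<Union>Q - m ` Q" using m v by force
    ultimately show "v \<in> \<Union>(boundary_join Q)" using join_facet_mem_boundary_join by blast
  qed
qed

lemma opp_vertex_boundary_join:
  assumes n: "1 \<le> n" and S: "S \<in> join_facets Q" and C: "C \<in> Q" and x: "x \<in> C" "x \<in> S"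
  shows "opp_vertex (boundary_join Q) S x = missing_vertex S C"
  by (rule opp_vertex_eqI[OF closed_complex_boundary_join n join_facet_mem_boundary_join[OF S]
        card_join_facet[OF S] x(2) missing_vertex_notin[OF S C]
        join_facet_mem_boundary_join[OF join_facet_exchange(1)[OF S C x]]])

lemma card_block_Int_join_facet:
  assumes "S \<in> join_facets Q" "C \<in> Q"
  shows "card (C \<inter> S) = card C - 1"
proof -
  have "C \<inter> S = C - {missing_vertex S C}" using block_diff_join_facet[OF assms] by blast
  then show ?thesis using missing_vertex_in_block[OF assms] finite_block[OF assms(2)] by simp
qed

lemma block_Int_join_facet_nonempty:
  assumes "S \<in> join_facets Q" "C \<in> Q"
  shows "C \<inter> S \<noteq> {}"
proof
  assume "C \<inter> S = {}"
  then have "card C - 1 = 0" using card_block_Int_join_facet[OF assms] by simp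
  then show False using two_le_card_block[OF assms(2)] by simp
qed

lemma char_partition_boundary_join:
  assumes n: "1 \<le> n" and S: "S \<in> join_facets Q"
  shows "char_partition (boundary_join Q) S = (\<lambda>C. C \<inter> S) ` Q"
proof -
  let ?r = "char_rel (boundary_join Q) S"
  have eq_class: "?r `` {x} = C \<inter> S" if C: "C \<in> Q" and x: "x \<in> C" "x \<in> S" for C x
  proof -
    have "opp_vertex (boundary_join Q) S x = opp_vertex (boundary_join Q) S y \<longleftrightarrow> y \<in> C"
      if y: "y \<in> S" for y
    proof -
      obtain C' where C': "C' \<in> Q" "y \<in> C'" using y join_facet_subset[OF S] by blast
      have "opp_vertex (boundary_join Q) S x = opp_vertex (boundary_join Q) S y
          \<longleftrightarrow> missing_vertex S C = missing_vertex S C'"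
        using opp_vertex_boundary_join[OF n S C x] opp_vertex_boundary_join[OF n S C' y] by simp
      also have "\<dots> \<longleftrightarrow> C = C'"
        using block_eqI[OF C C'(1) missing_vertex_in_block[OF S C]]
          missing_vertex_in_block[OF S C'(1)] by auto
      also have "\<dots> \<longleftrightarrow> y \<in> C" using block_eqI[OF C C'(1)] C'(2) by blast
      finally show ?thesis .
    qed
    then show ?thesis using x by (auto simp: char_rel_def)
  qed
  show ?thesis
    unfolding char_partition_def quotient_def
  proof safe
    fix x assume "x \<in> S"
    then obtain C where "C \<in> Q" "x \<in> C" using join_facet_subset[OF S] by blast
    then show "?r `` {x} \<in> (\<lambda>C. C \<inter> S) ` Q" using eq_class \<open>x \<in> S\<close> by blast
  next
    fix C assume C: "C \<in> Q"
    then obtain x where "x \<in> C \<inter> S" using block_Int_join_facet_nonempty[OF S] by blast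
    then show "C \<inter> S \<in> (\<Union>x\<in>S. {?r `` {x}})" using eq_class[OF C] by blast
  qed
qed

lemma char_partition_sizes_boundary_join:
  assumes "1 \<le> n" "S \<in> join_facets Q"
  shows "image_mset card (mset_set (char_partition (boundary_join Q) S))
    = image_mset (\<lambda>C. card C - 1) (mset_set Q)"
proof -
  have "inj_on (\<lambda>C. C \<inter> S) Q"
  proof (rule inj_onI)
    fix C C' assume C: "C \<in> Q" "C' \<in> Q" "C \<inter> S = C' \<inter> S"
    then obtain x where "x \<in> C" "x \<in> C'"
      using block_Int_join_facet_nonempty[OF assms(2) C(1)] by blast
    then show "C = C'" by (rule block_eqI[OF C(1,2)])
  qed
  then have "image_mset card (mset_set (char_partition (boundary_join Q) S))
      = image_mset (\<lambda>C. card (C \<inter> S)) (mset_set Q)"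
    by (simp add: char_partition_boundary_join[OF assms] image_mset_mset_set[symmetric]
        multiset.map_comp comp_def)
  also have "\<dots> = image_mset (\<lambda>C. card C - 1) (mset_set Q)"
    using card_block_Int_join_facet[OF assms(2)] finite_Q by (intro image_mset_cong) auto
  finally show ?thesis .
qed

lemma complex_iso_boundary_join_image:
  assumes f: "inj_on f (\<Union>Q)"
  shows "complex_iso f (boundary_join Q) (boundary_join ((`) f ` Q))"
  unfolding complex_iso_def
proof (intro conjI allI impI)
  have "\<Union>(boundary_join ((`) f ` Q)) = f ` \<Union>(boundary_join Q)"
    by (simp only: boundary_join_image[OF f] image_Union[symmetric])
  then show "bij_betw f (\<Union>(boundary_join Q)) (\<Union>(boundary_join ((`) f ` Q)))"
    using f by (simp add: bij_betw_def Union_boundary_join)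
  fix F assume F: "F \<subseteq> \<Union>(boundary_join Q)"
  have "f ` F \<in> (`) f ` boundary_join Q \<Longrightarrow> F \<in> boundary_join Q"
    using F boundary_join_subset_Union inj_on_image_eq_iff[OF f] Union_boundary_join by fastforce
  then show "F \<in> boundary_join Q \<longleftrightarrow> f ` F \<in> boundary_join ((`) f ` Q)"
    by (auto simp: boundary_join_image[OF f])
qed

end

section \<open>Complexes of type \<open>{3,4}\<close> are joins\<close>

context block_family
begin

lemma missing_vertex_mem_other_join_facet:
  assumes D: "D \<in> join_facets Q" and S: "S \<in> join_facets Q" and C: "C \<in> Q"
    and w: "w \<in> C" "w \<in> S" "w \<notin> D"
  shows "missing_vertex S C \<in> D"
proof (rule ccontr)
  assume "missing_vertex S C \<notin> D"
  then have "missing_vertex S C = missing_vertex D C"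
    using missing_vertex_eqI[OF D C missing_vertex_in_block[OF S C]] by simp
  also have "\<dots> = w" by (rule missing_vertex_eqI[OF D C w(1,3)])
  finally show False using missing_vertex_notin[OF S C] w(2) by simp
qed

lemma type34_join_facet_mem_if_exchanges_mem:
  assumes t: "type34 K n" and n: "2 \<le> n" and S: "S \<in> join_facets Q"
    and C: "C \<in> Q" "C' \<in> Q" "C \<noteq> C'" and w: "w \<in> C" "w \<in> S" and w': "w' \<in> C'" "w' \<in> S"
  defines "c \<equiv> missing_vertex S C" and "c' \<equiv> missing_vertex S C'"
  assumes S0: "insert c (S - {w}) \<in> K" and R': "insert c' (S - {w'}) \<in> K"
    and R: "insert c' (insert c (S - {w, w'})) \<in> K"
  shows "S \<in> K"
proof -
  define E where "E = S - {w, w'}"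
  have c: "c \<in> C" "c \<notin> S" and c': "c' \<in> C'" "c' \<notin> S"
    using missing_vertex_in_block missing_vertex_notin S C by (simp_all add: c_def c'_def)
  have "w \<noteq> w'" "c \<noteq> c'" using block_eqI C w w' c c' by metis+
  then have dist: "distinct [w', c, c', w]" using w w' c c' by auto
  have notin: "w' \<notin> E" "c \<notin> E" "c' \<notin> E" "w \<notin> E" using c c' by (auto simp: E_def)
  have "card E = n - 1"
    using card_join_facet[OF S] finite_join_facet[OF S] w(2) w'(2) \<open>w \<noteq> w'\<close> by (simp add: E_def)
  moreover have "insert w' (insert c E) = insert c (S - {w})"
    and "insert c (insert c' E) = insert c' (insert c (S - {w, w'}))"
    and "insert c' (insert w E) = insert c' (S - {w'})"
    and "insert w (insert w' E) = S"
    using w(2) w'(2) \<open>w \<noteq> w'\<close> by (auto simp: E_def)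
  ultimately show ?thesis
    using type34_close_square[OF t n _ notin dist] S0 R R' by simp
qed

lemma type34_join_facet_mem_if_two_vertices_outside:
  assumes t: "type34 K n" and n: "2 \<le> n" and D: "D \<in> join_facets Q" and S: "S \<in> join_facets Q"
    and w: "w \<in> S" "w \<notin> D" and w': "w' \<in> S" "w' \<notin> D" "w' \<noteq> w"
    and closer: "\<And>T. T \<in> join_facets Q \<Longrightarrow> card (T - D) < card (S - D) \<Longrightarrow> T \<in> K"
  shows "S \<in> K"
proof -
  obtain C C' where C: "C \<in> Q" "w \<in> C" and C': "C' \<in> Q" "w' \<in> C'"
    using join_facet_subset[OF S] w(1) w'(1) by blast
  have "C \<noteq> C'"
    using missing_vertex_eqI[OF D C w(2)] missing_vertex_eqI[OF D C' w'(2)] w'(3) by auto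
  let ?c = "missing_vertex S C" and ?c' = "missing_vertex S C'"
  let ?S0 = "insert ?c (S - {w})"
  have c: "?c \<in> D" by (rule missing_vertex_mem_other_join_facet[OF D S C w])
  have c': "?c' \<in> D" by (rule missing_vertex_mem_other_join_facet[OF D S C' w'(1,2)])
  have S0: "?S0 \<in> join_facets Q" by (rule join_facet_exchange(1)[OF S C w(1)])
  have S0_closer: "card (?S0 - D) < card (S - D)"
    by (rule card_exchange_Diff_less[OF finite_join_facet[OF S] w c])
  have w'S0: "w' \<in> ?S0" using w'(1,3) by simp
  have "missing_vertex ?S0 C' = ?c'"
    using join_facet_exchange(2)[OF S C w(1) C'(1)] \<open>C \<noteq> C'\<close> by simp
  then have "insert ?c' (?S0 - {w'}) \<in> join_facets Q"
    and "card (insert ?c' (?S0 - {w'}) - D) < card (?S0 - D)"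
    using join_facet_exchange(1)[OF S0 C'(1,2) w'S0]
      card_exchange_Diff_less[OF finite_join_facet[OF S0] w'S0 w'(2) c'] by simp_all
  moreover have "insert ?c' (?S0 - {w'}) = insert ?c' (insert ?c (S - {w, w'}))"
    using c w'(2) by auto
  moreover have "insert ?c' (S - {w'}) \<in> join_facets Q"
    by (rule join_facet_exchange(1)[OF S C' w'(1)])
  moreover have "card (insert ?c' (S - {w'}) - D) < card (S - D)"
    by (rule card_exchange_Diff_less[OF finite_join_facet[OF S] w'(1,2) c'])
  ultimately show ?thesis
    using type34_join_facet_mem_if_exchanges_mem[OF t n S C(1) C'(1) \<open>C \<noteq> C'\<close> C(2) w(1) C'(2) w'(1)]
      closer S0 S0_closer by simp
qed

text \<open>Every facet of the join is reached from \<open>D\<close> by exchanges; a facet at distance \<open>d \<ge> 2\<close>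
  from \<open>D\<close> closes a square whose other three corners are nearer to \<open>D\<close>.\<close>

lemma join_facets_subset_type34:
  assumes t: "type34 K n" and n: "2 \<le> n" and D: "D \<in> join_facets Q" "D \<in> K"
    and nbrs: "\<And>C x. C \<in> Q \<Longrightarrow> x \<in> C \<Longrightarrow> x \<in> D \<Longrightarrow> insert (missing_vertex D C) (D - {x}) \<in> K"
  shows "join_facets Q \<subseteq> K"
proof
  fix S assume "S \<in> join_facets Q"
  then show "S \<in> K"
  proof (induction "card (S - D)" arbitrary: S rule: less_induct)
    case less
    note S = less.prems
    have closer: "T \<in> K" if "T \<in> join_facets Q" "card (T - D) < card (S - D)" for T
      using less.hyps that by blast
    have eq_D: "T = D" if "T \<in> join_facets Q" "T \<subseteq> D" for T
      using that card_join_facet[OF D(1)] card_join_facet[OF that(1)] finite_join_facet[OF D(1)]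
      by (metis card_subset_eq)
    consider "S \<subseteq> D" | w where "S - D = {w}"
      | w w' where "w \<in> S" "w \<notin> D" "w' \<in> S" "w' \<notin> D" "w' \<noteq> w"
      by blast
    then show ?case
    proof cases
      case 1
      then show ?thesis using eq_D[OF S] D(2) by simp
    next
      case (2 w)
      then have w: "w \<in> S" "w \<notin> D" by auto
      obtain C where C: "C \<in> Q" "w \<in> C" using join_facet_subset[OF S] w(1) by blast
      let ?c = "missing_vertex S C"
      have c: "?c \<in> D" by (rule missing_vertex_mem_other_join_facet[OF D(1) S C w])
      have "insert ?c (S - {w}) \<subseteq> D" using 2 c by blast
      then have "insert ?c (S - {w}) = D" using eq_D join_facet_exchange(1)[OF S C w(1)] by blast
      then have "S = insert (missing_vertex D C) (D - {?c})"
        using missing_vertex_eqI[OF D(1) C w(2)] missing_vertex_notin[OF S C(1)] w(1) by auto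
      then show ?thesis using nbrs[OF C(1) missing_vertex_in_block[OF S C(1)] c] by simp
    next
      case (3 w w')
      then show ?thesis
        by (intro type34_join_facet_mem_if_two_vertices_outside[OF t n D(1) S] closer)
    qed
  qed
qed

lemma join_facet_if_facet:
  assumes cl: "closed_complex K n" and n: "1 \<le> n" and sc: "strongly_connected K n"
    and sub: "join_facets Q \<subseteq> K" and D: "D \<in> join_facets Q"
    and G: "G \<in> K" "card G = Suc n"
  shows "G \<in> join_facets Q"
proof -
  have "(facet_adj K n)\<^sup>*\<^sup>* D G"
    using sc sub D G card_join_facet[OF D] by (auto simp: strongly_connected_def)
  then show ?thesis
  proof (induction rule: rtranclp_induct)
    case (step X G)
    obtain x y where xy: "x \<in> X" "y \<notin> X" "G = insert y (X - {x})"
      using facet_adj_exchange[OF step(2)] by blast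
    obtain C where C: "C \<in> Q" "x \<in> C" using join_facet_subset[OF step(3)] xy(1) by blast
    have X: "X \<in> K" "card X = Suc n" using sub step(3) card_join_facet by auto
    have "G \<in> K" using step(2) by (simp add: facet_adj_def)
    then have "y = opp_vertex K X x" using opp_vertex_eqI[OF cl n X xy(1,2)] xy(3) by simp
    also have "\<dots> = missing_vertex X C"
      using opp_vertex_eqI[OF cl n X xy(1) missing_vertex_notin[OF step(3) C(1)]]
        sub join_facet_exchange(1)[OF step(3) C xy(1)] by blast
    finally show ?case using xy(3) join_facet_exchange(1)[OF step(3) C xy(1)] by simp
  qed (rule D)
qed

lemma eq_boundary_join_if_join_facets_subset:
  assumes cl: "closed_complex K n" and n: "1 \<le> n" and sc: "strongly_connected K n"
    and sub: "join_facets Q \<subseteq> K" and D: "D \<in> join_facets Q"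
  shows "K = boundary_join Q"
proof
  show "K \<subseteq> boundary_join Q"
  proof
    fix F assume F: "F \<in> K"
    obtain G where "G \<in> K" "card G = Suc n" "F \<subseteq> G"
      by (rule closed_complex_face_subset_facet[OF cl n F])
    moreover have "F \<noteq> {}"
      using F closed_complex_simplicial[OF cl] by (simp add: simplicial_complex_def)
    ultimately show "F \<in> boundary_join Q"
      using join_facet_if_facet[OF assms] by (auto simp: boundary_join_def)
  qed
  show "boundary_join Q \<subseteq> K"
    using sub simplicial_complex_subset_face[OF closed_complex_simplicial[OF cl]]
    by (auto simp: boundary_join_def)
qed

end

definition apex_blocks :: "('a set \<Rightarrow> 'a) \<Rightarrow> 'a set set \<Rightarrow> 'a set set" where
  "apex_blocks W P = (\<lambda>B. insert (W B) B) ` P"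

locale apex_partition =
  fixes D :: "'a set" and P :: "'a set set" and W :: "'a set \<Rightarrow> 'a" and n :: nat
  assumes partition: "partition_on D P" and finite_D: "finite D" and card_D: "card D = Suc n"
    and inj_W: "inj_on W P" and apex_notin: "B \<in> P \<Longrightarrow> W B \<notin> D"
begin

lemma block_subset: "B \<in> P \<Longrightarrow> B \<subseteq> D"
  using partition_onD1[OF partition] by blast

lemma apex_block_Int: "B \<in> P \<Longrightarrow> insert (W B) B \<inter> D = B"
  using block_subset apex_notin by blast

lemma Union_apex_blocks: "\<Union>(apex_blocks W P) = D \<union> W ` P"
  using partition_onD1[OF partition] by (auto simp: apex_blocks_def)

lemma card_apex_blocks: "card (apex_blocks W P) = card P"
  unfolding apex_blocks_def using apex_block_Int by (intro card_image inj_onI) metis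

lemma finite_P: "finite P"
  using finite_elements[OF finite_D partition] .

end

sublocale apex_partition \<subseteq> block_family "apex_blocks W P" n
proof
  show "finite (apex_blocks W P)" using finite_P by (simp add: apex_blocks_def)
  fix C assume "C \<in> apex_blocks W P"
  then obtain B where B: "B \<in> P" "C = insert (W B) B" by (auto simp: apex_blocks_def)
  have finB: "finite B" using block_subset[OF B(1)] finite_D by (rule finite_subset)
  then show "finite C" using B(2) by simp
  have "B \<noteq> {}" using partition_onD3[OF partition] B(1) by blast
  then have "1 \<le> card B" using finB by (simp add: Suc_le_eq card_gt_0_iff)
  moreover have "W B \<notin> B" using block_subset[OF B(1)] apex_notin[OF B(1)] by blast
  ultimately show "2 \<le> card C" using B(2) finB by simp
next
  show "disjoint (apex_blocks W P)"
  proof (rule disjointI)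
    fix C C' assume "C \<in> apex_blocks W P" "C' \<in> apex_blocks W P" "C \<noteq> C'"
    then obtain B B' where B: "B \<in> P" "C = insert (W B) B" and B': "B' \<in> P" "C' = insert (W B') B'"
      and "B \<noteq> B'" by (auto simp: apex_blocks_def)
    then have "W B \<noteq> W B'" "B \<inter> B' = {}"
      using inj_onD[OF inj_W] disjointD[OF partition_onD2[OF partition]] by blast+
    then show "C \<inter> C' = {}"
      using B B' block_subset apex_notin by blast
  qed
next
  have "card (D \<union> W ` P) = Suc n + card P"
    using finite_D finite_P apex_notin card_D card_image[OF inj_W] by (subst card_Un_disjoint) auto
  then show "card (\<Union>(apex_blocks W P)) = card (apex_blocks W P) + Suc n"
    by (simp add: Union_apex_blocks card_apex_blocks)
qed

context apex_partition
begin

lemma base_join_facet: "D \<in> join_facets (apex_blocks W P)"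
proof -
  have "insert (W B) B - D = {W B}" if "B \<in> P" for B
    using block_subset[OF that] apex_notin[OF that] by blast
  moreover have "D \<subseteq> \<Union>(apex_blocks W P)" by (simp add: Union_apex_blocks)
  ultimately show ?thesis by (auto simp: join_facets_def apex_blocks_def)
qed

lemma missing_vertex_base: "B \<in> P \<Longrightarrow> missing_vertex D (insert (W B) B) = W B"
  by (rule missing_vertex_eqI[OF base_join_facet]) (auto simp: apex_blocks_def apex_notin)

lemma char_partition_base:
  assumes "1 \<le> n"
  shows "char_partition (boundary_join (apex_blocks W P)) D = P"
  using char_partition_boundary_join[OF assms base_join_facet] apex_block_Int
  by (simp add: apex_blocks_def image_image)

end

lemma apex_partition_iso:
  assumes A1: "apex_partition D P W1 n" and A2: "apex_partition D P W2 n"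
  obtains f where "complex_iso f (boundary_join (apex_blocks W1 P)) (boundary_join (apex_blocks W2 P))"
    and "\<And>i. i \<in> D \<Longrightarrow> f i = i"
proof -
  interpret A1: apex_partition D P W1 n by (rule A1)
  interpret A2: apex_partition D P W2 n by (rule A2)
  define f where "f v = (if v \<in> D then v else W2 (inv_into P W1 v))" for v
  have f_apex: "f (W1 B) = W2 B" if "B \<in> P" for B
    using that A1.apex_notin inv_into_f_f[OF A1.inj_W] by (simp add: f_def)
  have f_block: "f ` insert (W1 B) B = insert (W2 B) B" if "B \<in> P" for B
  proof -
    have "\<forall>x\<in>B. f x = x" using A1.block_subset[OF that] by (auto simp: f_def)
    then have "f ` B = B" by force
    then show ?thesis using f_apex[OF that] by simp
  qed
  have "inj_on f (D \<union> W1 ` P)"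
    using A2.apex_notin inj_onD[OF A2.inj_W] by (auto simp: inj_on_def f_apex) (auto simp: f_def)
  then have "complex_iso f (boundary_join (apex_blocks W1 P))
      (boundary_join ((`) f ` apex_blocks W1 P))"
    by (intro A1.complex_iso_boundary_join_image) (simp add: A1.Union_apex_blocks)
  moreover have "(`) f ` apex_blocks W1 P = apex_blocks W2 P"
    using f_block by (simp add: apex_blocks_def image_image)
  ultimately show ?thesis using that by (simp add: f_def)
qed

lemma apex_partition_char_partition:
  assumes cl: "closed_complex K n" and n: "1 \<le> n" and D: "D \<in> K" "card D = Suc n"
  defines "W \<equiv> \<lambda>B. opp_vertex K D (SOME x. x \<in> B)"
  shows "apex_partition D (char_partition K D) W n"
    and "B \<in> char_partition K D \<Longrightarrow> y \<in> B \<Longrightarrow> W B = opp_vertex K D y"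
proof -
  let ?P = "char_partition K D" and ?opp = "opp_vertex K D"
  have P_quotient: "?P = D // char_rel K D" by (simp add: char_partition_def)
  have part: "partition_on D ?P"
    unfolding P_quotient by (rule partition_on_quotient[OF equiv_char_rel])
  have W: "W B = ?opp y" if B: "B \<in> ?P" and y: "y \<in> B" for B y
  proof -
    obtain x where "B = char_rel K D `` {x}" "x \<in> D"
      using B unfolding P_quotient by (rule quotientE)
    then have "\<And>z. z \<in> B \<Longrightarrow> ?opp z = ?opp x" by (auto simp: char_rel_def)
    then show ?thesis using y someI[of "\<lambda>x. x \<in> B"] by (simp add: W_def)
  qed
  then show "B \<in> ?P \<Longrightarrow> y \<in> B \<Longrightarrow> W B = ?opp y" .
  have elem: "\<exists>y. y \<in> B \<and> y \<in> D" if B: "B \<in> ?P" for B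
  proof -
    obtain y where "y \<in> B" using B partition_onD3[OF part] by (metis ex_in_conv)
    then show ?thesis using B partition_onD1[OF part] by auto
  qed
  show "apex_partition D ?P W n"
  proof
    show "inj_on W ?P"
    proof (rule inj_onI)
      fix B B' assume B: "B \<in> ?P" "B' \<in> ?P" "W B = W B'"
      obtain x x' where x: "x \<in> B" "x \<in> D" and x': "x' \<in> B'" "x' \<in> D"
        using elem[OF B(1)] elem[OF B(2)] by blast
      then have "(x, x') \<in> char_rel K D"
        using W[OF B(1) x(1)] W[OF B(2) x'(1)] B(3) by (simp add: char_rel_def)
      then show "B = B'"
        using quotient_eq_iff[OF equiv_char_rel _ _ x(1) x'(1)] B(1,2) P_quotient by simp
    qed
    show "W B \<notin> D" if B: "B \<in> ?P" for B
      using elem[OF B] W[OF B] opp_vertex_notin[OF cl n D] by auto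
  qed (use part D(2) card_ge_0_finite[of D] in simp_all)
qed

theorem type34_eq_boundary_join_apex_blocks:
  assumes sc: "strongly_connected K n" and t: "type34 K n" and n: "2 \<le> n"
    and D: "D \<in> K" "card D = Suc n"
  obtains W where "apex_partition D (char_partition K D) W n"
    and "K = boundary_join (apex_blocks W (char_partition K D))"
proof -
  have cl: "closed_complex K n" by (rule type34_closed_complex[OF t])
  have n1: "1 \<le> n" using n by simp
  define W where "W = (\<lambda>B. opp_vertex K D (SOME x. x \<in> B))"
  have W_opp: "W B = opp_vertex K D y" if "B \<in> char_partition K D" "y \<in> B" for B y
    using apex_partition_char_partition(2)[OF cl n1 D that] by (simp add: W_def)
  interpret apex_partition D "char_partition K D" W n
    unfolding W_def by (rule apex_partition_char_partition(1)[OF cl n1 D])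
  have "join_facets (apex_blocks W (char_partition K D)) \<subseteq> K"
  proof (rule join_facets_subset_type34[OF t n base_join_facet D(1)])
    fix C x assume C: "C \<in> apex_blocks W (char_partition K D)" and x: "x \<in> C" "x \<in> D"
    then obtain B where B: "B \<in> char_partition K D" "C = insert (W B) B"
      by (auto simp: apex_blocks_def)
    then have "x \<in> B" using x apex_notin by auto
    then show "insert (missing_vertex D C) (D - {x}) \<in> K"
      using missing_vertex_base[OF B(1)] W_opp[OF B(1)] B(2) opp_vertex_exchange_mem[OF cl n1 D x(2)]
      by simp
  qed
  then have "K = boundary_join (apex_blocks W (char_partition K D))"
    by (rule eq_boundary_join_if_join_facets_subset[OF cl n1 sc _ base_join_facet])
  then show ?thesis using that apex_partition_axioms by blast
qed

lemma apex_partition_Min: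
  assumes "partition_on {1..Suc n} P"
  shows "apex_partition {1..Suc n} P (\<lambda>B. Suc n + Min B) n"
proof
  have Min: "Min B \<in> B" if "B \<in> P" for B
    using assms that partition_onD3[OF assms] finite_subset[of B "{1..Suc n}"]
    by (intro Min_in) (auto dest: partition_onD1)
  show "inj_on (\<lambda>B. Suc n + Min B) P"
  proof (rule inj_onI)
    fix B B' assume B: "B \<in> P" "B' \<in> P" "Suc n + Min B = Suc n + Min B'"
    then have "Min B \<in> B \<inter> B'" using Min[OF B(1)] Min[OF B(2)] by simp
    then show "B = B'" using disjointD[OF partition_onD2[OF assms] B(1,2)] by blast
  qed
  show "Suc n + Min B \<notin> {1..Suc n}" if "B \<in> P" for B
  proof -
    have "Min B \<in> {1..Suc n}" using Min[OF that] that partition_onD1[OF assms] by blast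
    then show ?thesis by simp
  qed
qed (use assms in simp_all)

lemma type34_iso_if_char_partition_eq:
  assumes n: "2 \<le> n" and D: "card D = Suc n"
    and K1: "strongly_connected K1 n" "type34 K1 n" "D \<in> K1"
    and K2: "strongly_connected K2 n" "type34 K2 n" "D \<in> K2"
    and P: "char_partition K1 D = char_partition K2 D"
  shows "\<exists>f. complex_iso f K1 K2 \<and> (\<forall>i\<in>D. f i = i)"
proof -
  obtain W1 where "apex_partition D (char_partition K1 D) W1 n"
    "K1 = boundary_join (apex_blocks W1 (char_partition K1 D))"
    by (rule type34_eq_boundary_join_apex_blocks[OF K1(1,2) n K1(3) D])
  moreover obtain W2 where "apex_partition D (char_partition K1 D) W2 n"
    "K2 = boundary_join (apex_blocks W2 (char_partition K1 D))"
    using type34_eq_boundary_join_apex_blocks[OF K2(1,2) n K2(3) D] P by metis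
  ultimately show ?thesis by (metis apex_partition_iso)
qed

lemma type34_char_partition_sizes_eq:
  assumes n: "2 \<le> n" and sc: "strongly_connected K n" and t: "type34 K n"
    and D1: "D1 \<in> K" "card D1 = Suc n" and D2: "D2 \<in> K" "card D2 = Suc n"
  shows "image_mset card (mset_set (char_partition K D1))
    = image_mset card (mset_set (char_partition K D2))"
proof -
  have n1: "1 \<le> n" using n by simp
  obtain W where W: "apex_partition D1 (char_partition K D1) W n"
    and K: "K = boundary_join (apex_blocks W (char_partition K D1))"
    by (rule type34_eq_boundary_join_apex_blocks[OF sc t n D1])
  interpret apex_partition D1 "char_partition K D1" W n by (rule W)
  have "D2 \<in> join_facets (apex_blocks W (char_partition K D1))"
    using boundary_join_facet D2 K by simp
  then show ?thesis
    using char_partition_sizes_boundary_join[OF n1] base_join_facet K by metis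
qed

theorem lemma2p1:
  fixes n :: nat and P :: "nat set set"
  assumes "n \<ge> 2" and "partition_on {1..n+1} P"
  shows "(\<exists>K :: nat set set. strongly_connected K n \<and> type34 K n \<and> {1..n+1} \<in> K \<and>
            char_partition K {1..n+1} = P)
       \<and> (\<forall>K1 K2 :: nat set set.
            strongly_connected K1 n \<and> type34 K1 n \<and> {1..n+1} \<in> K1 \<and>
            char_partition K1 {1..n+1} = P \<and>
            strongly_connected K2 n \<and> type34 K2 n \<and> {1..n+1} \<in> K2 \<and>
            char_partition K2 {1..n+1} = P \<longrightarrow>
            (\<exists>f. complex_iso f K1 K2 \<and> (\<forall>i\<in>{1..n+1}. f i = i)))
       \<and> (\<forall>(K :: 'a set set) D1 D2.
            strongly_connected K n \<and> type34 K n \<and>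
            D1 \<in> K \<and> card D1 = n + 1 \<and> D2 \<in> K \<and> card D2 = n + 1 \<longrightarrow>
            image_mset card (mset_set (char_partition K D1)) =
            image_mset card (mset_set (char_partition K D2)))"
proof (intro conjI allI impI)
  interpret apex_partition "{1..n+1}" P "\<lambda>B. Suc n + Min B" n
    using apex_partition_Min assms(2) by simp
  show "\<exists>K. strongly_connected K n \<and> type34 K n \<and> {1..n+1} \<in> K \<and> char_partition K {1..n+1} = P"
    using strongly_connected_boundary_join type34_boundary_join[OF assms(1)]
      join_facet_mem_boundary_join[OF base_join_facet] char_partition_base assms(1) by auto
qed (simp_all add: type34_iso_if_char_partition_eq[OF assms(1)]
    type34_char_partition_sizes_eq[OF assms(1)])
end
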